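(* Suppose the following hold for some $\epsilon>0$: - (local independences) $Y\perp\!\!\!\perp Z\mid(D,U)$ and $W\perp\!\!\!\perp(D,Z)\mid U$, for conditioning values $d\in\mathcal{D}(\epsilon)$, $z\in\mathcal{Z}(\epsilon)$; - (BRIDGE) there exist bounded functions $h_+,h_-$ such that $E[Y\mid D=d,U]=\int h_+(d-d^*,w)\,\mathrm{d}P(w\mid D=d,U)$ a.s. for all $d\in\mathcal{D}_+(\epsilon)$, and $E[Y\mid D=d,U]=\int h_-(d-d^*,w)\,\mathrm{d}P(w\mid D=d,U)$ a.s. for all $d\in\mathcal{D}_-(\epsilon)$. Let $h_0(t,w)=h_+(t,w)$ for $t>0$ and $h_0(t,w)=h_-(t,w)$ for $t<0$. Then for all $d\in\mathcal{D}(\epsilon)$ and $z\in\mathcal{Z}(\epsilon)$, $$E[Y\mid D=d,Z=z]=\int h_0(d-d^*,w)\,\mathrm{d}P(w\mid D=d,Z=z).$$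
   Context: $Y\in\mathbb{R}$ is an outcome, $D\in\mathbb{R}$ a running variable with cutoff $d^*$, $Z$ a placebo treatment, $W$ a placebo outcome and $U$ an unobserved confounder, all on one probability space with conditional densities. For $\epsilon>0$: $\mathcal{D}_-(\epsilon)=(d^*-\epsilon,d^* )$, $\mathcal{D}_+(\epsilon)=(d^*,d^*+\epsilon)$ and $\mathcal{D}(\epsilon)=\mathcal{D}_-\cup\mathcal{D}_+$. $\mathcal{Z}(\epsilon)$ is a set with $P(Z\in\mathcal{Z}(\epsilon)\mid D\in\mathcal{D}(\epsilon))=1$. *)

theory Defs
  imports "HOL-Analysis.Analysis"
begin

text \<open>
Setting: the joint law of (Y, D, Z, W, U) has a density f (w.r.t. the product of
lborel for Y, lborel for D, and sigma-finite reference measures MZ, MW, MU for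
Z, W, U).  The argument order of f is (y, d, z, w, u).  All marginal densities
are obtained by integrating f out (nonnegative integrals, so Tonelli is exact),
and conditional densities are ratios of marginal densities.
\<close>

definition dens_YDZU :: "(real \<Rightarrow> real \<Rightarrow> 'z \<Rightarrow> 'w \<Rightarrow> 'u \<Rightarrow> ennreal) \<Rightarrow> 'w measure
    \<Rightarrow> real \<Rightarrow> real \<Rightarrow> 'z \<Rightarrow> 'u \<Rightarrow> ennreal" where
  "dens_YDZU f MW y d z u = (\<integral>\<^sup>+ w. f y d z w u \<partial>MW)"

definition dens_WDZU :: "(real \<Rightarrow> real \<Rightarrow> 'z \<Rightarrow> 'w \<Rightarrow> 'u \<Rightarrow> ennreal)
    \<Rightarrow> 'w \<Rightarrow> real \<Rightarrow> 'z \<Rightarrow> 'u \<Rightarrow> ennreal" where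
  "dens_WDZU f w d z u = (\<integral>\<^sup>+ y. f y d z w u \<partial>lborel)"

definition dens_DZU :: "(real \<Rightarrow> real \<Rightarrow> 'z \<Rightarrow> 'w \<Rightarrow> 'u \<Rightarrow> ennreal) \<Rightarrow> 'w measure
    \<Rightarrow> real \<Rightarrow> 'z \<Rightarrow> 'u \<Rightarrow> ennreal" where
  "dens_DZU f MW d z u = (\<integral>\<^sup>+ y. dens_YDZU f MW y d z u \<partial>lborel)"

definition dens_YDU :: "(real \<Rightarrow> real \<Rightarrow> 'z \<Rightarrow> 'w \<Rightarrow> 'u \<Rightarrow> ennreal) \<Rightarrow> 'z measure \<Rightarrow> 'w measure
    \<Rightarrow> real \<Rightarrow> real \<Rightarrow> 'u \<Rightarrow> ennreal" where
  "dens_YDU f MZ MW y d u = (\<integral>\<^sup>+ z. dens_YDZU f MW y d z u \<partial>MZ)"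

definition dens_DU :: "(real \<Rightarrow> real \<Rightarrow> 'z \<Rightarrow> 'w \<Rightarrow> 'u \<Rightarrow> ennreal) \<Rightarrow> 'z measure \<Rightarrow> 'w measure
    \<Rightarrow> real \<Rightarrow> 'u \<Rightarrow> ennreal" where
  "dens_DU f MZ MW d u = (\<integral>\<^sup>+ z. dens_DZU f MW d z u \<partial>MZ)"

definition dens_WDU :: "(real \<Rightarrow> real \<Rightarrow> 'z \<Rightarrow> 'w \<Rightarrow> 'u \<Rightarrow> ennreal) \<Rightarrow> 'z measure
    \<Rightarrow> 'w \<Rightarrow> real \<Rightarrow> 'u \<Rightarrow> ennreal" where
  "dens_WDU f MZ w d u = (\<integral>\<^sup>+ z. dens_WDZU f w d z u \<partial>MZ)"

definition dens_WU :: "(real \<Rightarrow> real \<Rightarrow> 'z \<Rightarrow> 'w \<Rightarrow> 'u \<Rightarrow> ennreal) \<Rightarrow> 'z measure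
    \<Rightarrow> 'w \<Rightarrow> 'u \<Rightarrow> ennreal" where
  "dens_WU f MZ w u = (\<integral>\<^sup>+ d. dens_WDU f MZ w d u \<partial>lborel)"

definition dens_U :: "(real \<Rightarrow> real \<Rightarrow> 'z \<Rightarrow> 'w \<Rightarrow> 'u \<Rightarrow> ennreal) \<Rightarrow> 'z measure \<Rightarrow> 'w measure
    \<Rightarrow> 'u \<Rightarrow> ennreal" where
  "dens_U f MZ MW u = (\<integral>\<^sup>+ w. dens_WU f MZ w u \<partial>MW)"

definition dens_YDZ :: "(real \<Rightarrow> real \<Rightarrow> 'z \<Rightarrow> 'w \<Rightarrow> 'u \<Rightarrow> ennreal) \<Rightarrow> 'w measure \<Rightarrow> 'u measure
    \<Rightarrow> real \<Rightarrow> real \<Rightarrow> 'z \<Rightarrow> ennreal" where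
  "dens_YDZ f MW MU y d z = (\<integral>\<^sup>+ u. dens_YDZU f MW y d z u \<partial>MU)"

definition dens_WDZ :: "(real \<Rightarrow> real \<Rightarrow> 'z \<Rightarrow> 'w \<Rightarrow> 'u \<Rightarrow> ennreal) \<Rightarrow> 'u measure
    \<Rightarrow> 'w \<Rightarrow> real \<Rightarrow> 'z \<Rightarrow> ennreal" where
  "dens_WDZ f MU w d z = (\<integral>\<^sup>+ u. dens_WDZU f w d z u \<partial>MU)"

definition dens_DZ :: "(real \<Rightarrow> real \<Rightarrow> 'z \<Rightarrow> 'w \<Rightarrow> 'u \<Rightarrow> ennreal) \<Rightarrow> 'w measure \<Rightarrow> 'u measure
    \<Rightarrow> real \<Rightarrow> 'z \<Rightarrow> ennreal" where
  "dens_DZ f MW MU d z = (\<integral>\<^sup>+ u. dens_DZU f MW d z u \<partial>MU)"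

definition cdens_Y_DZU where
  "cdens_Y_DZU f MW y d z u = dens_YDZU f MW y d z u / dens_DZU f MW d z u"

definition cdens_Y_DU where
  "cdens_Y_DU f MZ MW y d u = dens_YDU f MZ MW y d u / dens_DU f MZ MW d u"

definition cdens_W_DZU where
  "cdens_W_DZU f MW w d z u = dens_WDZU f w d z u / dens_DZU f MW d z u"

definition cdens_W_U where
  "cdens_W_U f MZ MW w u = dens_WU f MZ w u / dens_U f MZ MW u"

definition cdens_W_DU where
  "cdens_W_DU f MZ MW w d u = dens_WDU f MZ w d u / dens_DU f MZ MW d u"

definition cdens_Y_DZ where
  "cdens_Y_DZ f MW MU y d z = dens_YDZ f MW MU y d z / dens_DZ f MW MU d z"

definition cdens_W_DZ where
  "cdens_W_DZ f MW MU w d z = dens_WDZ f MU w d z / dens_DZ f MW MU d z"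

definition condE_Y_DZ where
  "condE_Y_DZ f MW MU d z = (\<integral> y. y * enn2real (cdens_Y_DZ f MW MU y d z) \<partial>lborel)"

definition condE_Y_DU where
  "condE_Y_DU f MZ MW d u = (\<integral> y. y * enn2real (cdens_Y_DU f MZ MW y d u) \<partial>lborel)"

definition cint_W_DU :: "('w \<Rightarrow> real) \<Rightarrow> (real \<Rightarrow> real \<Rightarrow> 'z \<Rightarrow> 'w \<Rightarrow> 'u \<Rightarrow> ennreal)
    \<Rightarrow> 'z measure \<Rightarrow> 'w measure \<Rightarrow> real \<Rightarrow> 'u \<Rightarrow> real" where
  "cint_W_DU g f MZ MW d u = (\<integral> w. g w * enn2real (cdens_W_DU f MZ MW w d u) \<partial>MW)"

definition cint_W_DZ :: "('w \<Rightarrow> real) \<Rightarrow> (real \<Rightarrow> real \<Rightarrow> 'z \<Rightarrow> 'w \<Rightarrow> 'u \<Rightarrow> ennreal)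
    \<Rightarrow> 'w measure \<Rightarrow> 'u measure \<Rightarrow> real \<Rightarrow> 'z \<Rightarrow> real" where
  "cint_W_DZ g f MW MU d z = (\<integral> w. g w * enn2real (cdens_W_DZ f MW MU w d z) \<partial>MW)"

definition Y_indep_Z_given_DU where
  "Y_indep_Z_given_DU f MZ MW d z \<longleftrightarrow>
     (\<forall>y u. 0 < dens_DZU f MW d z u \<longrightarrow> cdens_Y_DZU f MW y d z u = cdens_Y_DU f MZ MW y d u)"

definition W_indep_DZ_given_U where
  "W_indep_DZ_given_U f MZ MW d z \<longleftrightarrow>
     (\<forall>w u. 0 < dens_DZU f MW d z u \<longrightarrow> cdens_W_DZU f MW w d z u = cdens_W_U f MZ MW w u)"

definition Dminus :: "real \<Rightarrow> real \<Rightarrow> real set" where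
  "Dminus dstar eps = {dstar - eps <..< dstar}"

definition Dplus :: "real \<Rightarrow> real \<Rightarrow> real set" where
  "Dplus dstar eps = {dstar <..< dstar + eps}"

definition Dwin :: "real \<Rightarrow> real \<Rightarrow> real set" where
  "Dwin dstar eps = Dminus dstar eps \<union> Dplus dstar eps"

text \<open>Glued bridge function h0 (value at t = 0 irrelevant).\<close>

definition h0 :: "(real \<Rightarrow> 'w \<Rightarrow> real) \<Rightarrow> (real \<Rightarrow> 'w \<Rightarrow> real) \<Rightarrow> real \<Rightarrow> 'w \<Rightarrow> real" where
  "h0 hp hm t w = (if t > 0 then hp t w else hm t w)"

end

theory Submission
  imports Defs
begin

text \<open>
For fixed d and z, both sides are mixtures over u of u-conditional quantities, weighted by the
conditional density of U given (D, Z) = (d, z).  For almost every u in the support of that weight,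
Y \<perp> Z | (D, U) turns the Y-side into E[Y | D = d, U = u], the bridge rewrites this as an integral
of h0(d - d*, \<cdot>) against P(w | D = d, U = u), and W \<perp> (D, Z) | U identifies that law with
P(w | D = d, Z = z, U = u): the joint density of (Z, W) given (D, U) = (d, u) factorises, so its
W-marginal is the common conditional density.  Integrating out u (Fubini) gives the claim.
\<close>

(* No side conditions: for y = 0 or y = \<infinity> both sides are 0. *)
lemma enn2real_divide: "enn2real (x / y) = enn2real x / enn2real y"
proof (cases y rule: ennreal_cases)
  case (real r)
  show ?thesis
  proof (cases "r = 0")
    case False
    with real show ?thesis
      by (cases x rule: ennreal_cases) (auto simp: divide_ennreal ennreal_top_divide)
  qed (use real in simp)
qed simp

lemma integral_mult_enn2real_divide:
  "(\<integral>x. g x * enn2real (a x / q) \<partial>M) = (\<integral>x. g x * enn2real (a x) \<partial>M) / enn2real q"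
  by (simp add: enn2real_divide)

lemma integrable_bounded_mult_enn2real:
  fixes h :: "'a \<Rightarrow> real"
  assumes "h \<in> borel_measurable M" "\<And>x. \<bar>h x\<bar> \<le> C"
    and "B \<in> borel_measurable M" "(\<integral>\<^sup>+x. B x \<partial>M) < \<infinity>"
  shows "integrable M (\<lambda>x. h x * enn2real (B x))"
proof (rule integrableI_bounded)
  show "(\<lambda>x. h x * enn2real (B x)) \<in> borel_measurable M"
    using assms by measurable
  have "(\<integral>\<^sup>+x. ennreal (norm (h x * enn2real (B x))) \<partial>M) \<le> (\<integral>\<^sup>+x. ennreal C * B x \<partial>M)"
  proof (intro nn_integral_mono)
    fix x
    have "ennreal (norm (h x * enn2real (B x))) = ennreal \<bar>h x\<bar> * ennreal (enn2real (B x))"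
      by (simp add: abs_mult ennreal_mult)
    also have "\<dots> \<le> ennreal C * B x"
      using assms(2) by (intro mult_mono ennreal_leI) (auto simp: ennreal_enn2real_if)
    finally show "ennreal (norm (h x * enn2real (B x))) \<le> ennreal C * B x" .
  qed
  also have "\<dots> < \<infinity>"
    using assms(3,4) by (simp add: nn_integral_cmult ennreal_mult_less_top)
  finally show "(\<integral>\<^sup>+x. ennreal (norm (h x * enn2real (B x))) \<partial>M) < \<infinity>" .
qed

(* In ennreal, k / 0 only takes the values 0 and \<infinity>, and k / \<infinity> = 0;
   neither can integrate to 1. *)
lemma normalizer_pos_finite:
  fixes g k :: "'a \<Rightarrow> ennreal"
  assumes "\<And>x. g x = k x / p" "g \<in> borel_measurable M" "(\<integral>\<^sup>+x. g x \<partial>M) = 1"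
  shows "0 < p \<and> p < \<infinity>"
proof (intro conjI)
  show "p < \<infinity>"
  proof (rule ccontr)
    assume "\<not> p < \<infinity>"
    then have "g x = 0" for x using assms(1)[of x] by (simp add: not_less top_unique)
    then have "g = (\<lambda>x. 0)" by (simp add: fun_eq_iff)
    then show False using assms(3) by simp
  qed
  show "0 < p"
  proof (rule ccontr)
    assume "\<not> 0 < p"
    then have absorb: "g x = \<infinity> * g x" for x
      using assms(1) by (simp add: ennreal_top_mult)
    have "(\<integral>\<^sup>+x. g x \<partial>M) = (\<integral>\<^sup>+x. \<infinity> * g x \<partial>M)"
      by (rule nn_integral_cong) (rule absorb)
    also have "\<dots> = \<infinity> * (\<integral>\<^sup>+x. g x \<partial>M)"
      by (rule nn_integral_cmult[OF assms(2)])
    finally show False using assms(3) by simp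
  qed
qed

lemma integrable_pair_mult_enn2real:
  fixes a :: "'x \<Rightarrow> 'u \<Rightarrow> ennreal" and c :: "'x \<Rightarrow> real"
  assumes "sigma_finite_measure M" "sigma_finite_measure N"
    and a: "(\<lambda>(x, u). a x u) \<in> borel_measurable (M \<Otimes>\<^sub>M N)" and c: "c \<in> borel_measurable M"
    and int: "integrable M (\<lambda>x. c x * enn2real (\<integral>\<^sup>+u. a x u \<partial>N))"
    and fin: "(\<integral>\<^sup>+x. (\<integral>\<^sup>+u. a x u \<partial>N) \<partial>M) < \<infinity>"
  shows "integrable (M \<Otimes>\<^sub>M N) (\<lambda>(x, u). c x * enn2real (a x u))"
proof (rule integrableI_bounded)
  interpret pair_sigma_finite M N using assms(1,2) by (simp add: pair_sigma_finite_def)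
  have a_x: "(\<lambda>u. a x u) \<in> borel_measurable N" if "x \<in> space M" for x
    using measurable_Pair2[OF a that] by simp
  have "(\<lambda>x. \<integral>\<^sup>+u. a x u \<partial>N) \<in> borel_measurable M"
    using a by measurable
  then have A_fin: "AE x in M. (\<integral>\<^sup>+u. a x u \<partial>N) \<noteq> \<infinity>"
    using fin by (intro nn_integral_PInf_AE) auto
  show "(\<lambda>(x, u). c x * enn2real (a x u)) \<in> borel_measurable (M \<Otimes>\<^sub>M N)"
    using a c by measurable
  have "(\<lambda>p. ennreal (norm (case p of (x, u) \<Rightarrow> c x * enn2real (a x u))))
      \<in> borel_measurable (M \<Otimes>\<^sub>M N)"
    using a c by measurable
  from sigma_finite_measure.nn_integral_fst[OF assms(2) this, symmetric]
  have "(\<integral>\<^sup>+p. ennreal (norm (case p of (x, u) \<Rightarrow> c x * enn2real (a x u))) \<partial>(M \<Otimes>\<^sub>M N))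
      = (\<integral>\<^sup>+x. \<integral>\<^sup>+u. ennreal \<bar>c x\<bar> * ennreal (enn2real (a x u)) \<partial>N \<partial>M)"
    by (simp add: abs_mult ennreal_mult)
  also have "\<dots> \<le> (\<integral>\<^sup>+x. ennreal \<bar>c x\<bar> * (\<integral>\<^sup>+u. a x u \<partial>N) \<partial>M)"
    by (intro nn_integral_mono)
       (auto simp: nn_integral_cmult[OF a_x, symmetric] ennreal_enn2real_if
             intro!: nn_integral_mono mult_left_mono)
  also have "\<dots> = (\<integral>\<^sup>+x. ennreal (norm (c x * enn2real (\<integral>\<^sup>+u. a x u \<partial>N))) \<partial>M)"
    using A_fin by (intro nn_integral_cong_AE, eventually_elim)
      (auto simp: abs_mult ennreal_mult ennreal_enn2real_if)
  also have "\<dots> < \<infinity>"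
    using int by (simp add: integrable_iff_bounded)
  finally show "(\<integral>\<^sup>+p. ennreal (norm (case p of (x, u) \<Rightarrow> c x * enn2real (a x u))) \<partial>(M \<Otimes>\<^sub>M N)) < \<infinity>" .
qed

lemma integral_mult_enn2real_nn_integral:
  fixes a :: "'x \<Rightarrow> 'u \<Rightarrow> ennreal" and c :: "'x \<Rightarrow> real"
  assumes "sigma_finite_measure M" "sigma_finite_measure N"
    and a: "(\<lambda>(x, u). a x u) \<in> borel_measurable (M \<Otimes>\<^sub>M N)" and c: "c \<in> borel_measurable M"
    and int: "integrable M (\<lambda>x. c x * enn2real (\<integral>\<^sup>+u. a x u \<partial>N))"
    and fin: "(\<integral>\<^sup>+x. (\<integral>\<^sup>+u. a x u \<partial>N) \<partial>M) < \<infinity>"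
  shows "(\<integral>x. c x * enn2real (\<integral>\<^sup>+u. a x u \<partial>N) \<partial>M) = (\<integral>u. \<integral>x. c x * enn2real (a x u) \<partial>M \<partial>N)"
proof -
  interpret pair_sigma_finite M N using assms(1,2) by (simp add: pair_sigma_finite_def)
  have A: "(\<lambda>x. \<integral>\<^sup>+u. a x u \<partial>N) \<in> borel_measurable M"
    using a by measurable
  have A_fin: "AE x in M. (\<integral>\<^sup>+u. a x u \<partial>N) \<noteq> \<infinity>"
    using A fin by (intro nn_integral_PInf_AE) auto
  have a_x: "(\<lambda>u. a x u) \<in> borel_measurable N" if "x \<in> space M" for x
    using measurable_Pair2[OF a that] by simp
  have inner: "(\<integral>u. c x * enn2real (a x u) \<partial>N) = c x * enn2real (\<integral>\<^sup>+u. a x u \<partial>N)"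
    if "x \<in> space M" "(\<integral>\<^sup>+u. a x u \<partial>N) \<noteq> \<infinity>" for x
  proof -
    have "AE u in N. a x u \<noteq> \<infinity>"
      using nn_integral_PInf_AE[OF a_x] that by auto
    then have "(\<integral>\<^sup>+u. ennreal (enn2real (a x u)) \<partial>N) = (\<integral>\<^sup>+u. a x u \<partial>N)"
      by (intro nn_integral_cong_AE) (auto simp: ennreal_enn2real_if)
    moreover have "(\<integral>u. enn2real (a x u) \<partial>N) = enn2real (\<integral>\<^sup>+u. ennreal (enn2real (a x u)) \<partial>N)"
      using a_x[OF that(1)] by (intro integral_eq_nn_integral) auto
    ultimately show ?thesis by simp
  qed
  have "(\<integral>u. \<integral>x. c x * enn2real (a x u) \<partial>M \<partial>N) = (\<integral>x. \<integral>u. c x * enn2real (a x u) \<partial>N \<partial>M)"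
    by (rule Fubini_integral[OF integrable_pair_mult_enn2real[OF assms]])
  also have "\<dots> = (\<integral>x. c x * enn2real (\<integral>\<^sup>+u. a x u \<partial>N) \<partial>M)"
  proof (rule integral_cong_AE)
    show "AE x in M. (\<integral>u. c x * enn2real (a x u) \<partial>N) = c x * enn2real (\<integral>\<^sup>+u. a x u \<partial>N)"
      using A_fin AE_space by eventually_elim (rule inner)
  qed (use a c A in measurable)
  finally show ?thesis ..
qed

lemma borel_measurable_integral_mult_enn2real:
  fixes a :: "'x \<Rightarrow> 'u \<Rightarrow> ennreal" and g :: "'x \<Rightarrow> real"
  assumes "sigma_finite_measure M"
    and a: "(\<lambda>(x, u). a x u) \<in> borel_measurable (M \<Otimes>\<^sub>M N)" and g: "g \<in> borel_measurable M"
  shows "(\<lambda>u. \<integral>x. g x * enn2real (a x u) \<partial>M) \<in> borel_measurable N"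
proof -
  have "(\<lambda>(u, x). a x u) \<in> borel_measurable (N \<Otimes>\<^sub>M M)"
    using measurable_pair_swap[OF a] by (simp add: case_prod_beta)
  then have "(\<lambda>(u, x). g x * enn2real (a x u)) \<in> borel_measurable (N \<Otimes>\<^sub>M M)"
    using g by measurable
  then show ?thesis
    by (rule sigma_finite_measure.borel_measurable_lebesgue_integral[OF assms(1)])
qed

lemma integral_mult_enn2real_eq_0:
  assumes "a \<in> borel_measurable M" "(\<integral>\<^sup>+x. a x \<partial>M) = 0"
  shows "(\<integral>x. g x * enn2real (a x) \<partial>M) = 0"
proof -
  have "AE x in M. a x = 0"
    using assms nn_integral_0_iff_AE by blast
  then show ?thesis
    by (intro integral_eq_zero_AE) auto
qed

lemma integral_mixture_eq:
  fixes a :: "'x \<Rightarrow> 'u \<Rightarrow> ennreal" and b :: "'w \<Rightarrow> 'u \<Rightarrow> ennreal"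
    and g :: "'x \<Rightarrow> real" and h :: "'w \<Rightarrow> real"
  assumes sX: "sigma_finite_measure MX" and sW: "sigma_finite_measure MW"
    and sU: "sigma_finite_measure MU"
    and a: "(\<lambda>(x, u). a x u) \<in> borel_measurable (MX \<Otimes>\<^sub>M MU)"
    and b: "(\<lambda>(w, u). b w u) \<in> borel_measurable (MW \<Otimes>\<^sub>M MU)"
    and g: "g \<in> borel_measurable MX" and h: "h \<in> borel_measurable MW"
    and qa: "\<And>u. u \<in> space MU \<Longrightarrow> q u = (\<integral>\<^sup>+x. a x u \<partial>MX)"
    and qb: "\<And>u. u \<in> space MU \<Longrightarrow> q u = (\<integral>\<^sup>+w. b w u \<partial>MW)"
    and q_fin: "(\<integral>\<^sup>+u. q u \<partial>MU) < \<infinity>"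
    and int_a: "integrable MX (\<lambda>x. g x * enn2real (\<integral>\<^sup>+u. a x u \<partial>MU))"
    and int_b: "integrable MW (\<lambda>w. h w * enn2real (\<integral>\<^sup>+u. b w u \<partial>MU))"
    and eq: "AE u in MU. 0 < q u \<and> q u < \<infinity> \<longrightarrow>
               (\<integral>x. g x * enn2real (a x u) \<partial>MX) = (\<integral>w. h w * enn2real (b w u) \<partial>MW)"
  shows "(\<integral>x. g x * enn2real (\<integral>\<^sup>+u. a x u \<partial>MU) \<partial>MX)
       = (\<integral>w. h w * enn2real (\<integral>\<^sup>+u. b w u \<partial>MU) \<partial>MW)"
proof -
  have a_u: "(\<lambda>x. a x u) \<in> borel_measurable MX" if "u \<in> space MU" for u
    using measurable_Pair1[OF a that] by simp
  have b_u: "(\<lambda>w. b w u) \<in> borel_measurable MW" if "u \<in> space MU" for u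
    using measurable_Pair1[OF b that] by simp
  have fin_a: "(\<integral>\<^sup>+x. (\<integral>\<^sup>+u. a x u \<partial>MU) \<partial>MX) < \<infinity>"
  proof -
    interpret pair_sigma_finite MX MU using sX sU by (simp add: pair_sigma_finite_def)
    show ?thesis
      using q_fin Fubini'[OF a] by (simp add: nn_integral_cong[OF qa])
  qed
  have fin_b: "(\<integral>\<^sup>+w. (\<integral>\<^sup>+u. b w u \<partial>MU) \<partial>MW) < \<infinity>"
  proof -
    interpret pair_sigma_finite MW MU using sW sU by (simp add: pair_sigma_finite_def)
    show ?thesis
      using q_fin Fubini'[OF b] by (simp add: nn_integral_cong[OF qb])
  qed
  have "(\<lambda>(u, x). a x u) \<in> borel_measurable (MU \<Otimes>\<^sub>M MX)"
    using measurable_pair_swap[OF a] by (simp add: case_prod_beta)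
  from sigma_finite_measure.borel_measurable_nn_integral[OF sX this]
  have "q \<in> borel_measurable MU"
    by (simp only: measurable_cong[OF qa])
  then have q_AE_fin: "AE u in MU. q u \<noteq> \<infinity>"
    using q_fin by (intro nn_integral_PInf_AE) auto
  have "(\<integral>x. g x * enn2real (\<integral>\<^sup>+u. a x u \<partial>MU) \<partial>MX) = (\<integral>u. \<integral>x. g x * enn2real (a x u) \<partial>MX \<partial>MU)"
    by (rule integral_mult_enn2real_nn_integral[OF sX sU a g int_a fin_a])
  also have "\<dots> = (\<integral>u. \<integral>w. h w * enn2real (b w u) \<partial>MW \<partial>MU)"
  proof (rule integral_cong_AE)
    show "AE u in MU. (\<integral>x. g x * enn2real (a x u) \<partial>MX) = (\<integral>w. h w * enn2real (b w u) \<partial>MW)"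
      using eq q_AE_fin AE_space
    proof eventually_elim
      case (elim u)
      show ?case
      proof (cases "q u = 0")
        case True
        then show ?thesis
          using qa qb elim(3) a_u b_u by (simp add: integral_mult_enn2real_eq_0)
      qed (use elim in \<open>simp add: less_top zero_less_iff_neq_zero\<close>)
    qed
  qed (intro borel_measurable_integral_mult_enn2real sX sW a b g h)+
  also have "\<dots> = (\<integral>w. h w * enn2real (\<integral>\<^sup>+u. b w u \<partial>MU) \<partial>MW)"
    by (rule integral_mult_enn2real_nn_integral[OF sW sU b h int_b fin_b, symmetric])
  finally show ?thesis .
qed

lemma AE_AE_eq_0_outside:
  fixes g :: "'z \<Rightarrow> 'u \<Rightarrow> ennreal"
  assumes sZ: "sigma_finite_measure MZ" and sU: "sigma_finite_measure MU"
    and g: "(\<lambda>(z, u). g z u) \<in> borel_measurable (MZ \<Otimes>\<^sub>M MU)" and S: "S \<in> sets MZ"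
    and zero: "(\<integral>\<^sup>+z. (\<integral>\<^sup>+u. g z u \<partial>MU) * indicator (space MZ - S) z \<partial>MZ) = 0"
  shows "AE u in MU. AE z in MZ. z \<in> S \<or> g z u = 0"
proof -
  interpret pair_sigma_finite MZ MU using sZ sU by (simp add: pair_sigma_finite_def)
  have g_z: "(\<lambda>u. g z u) \<in> borel_measurable MU" if "z \<in> space MZ" for z
    using measurable_Pair2[OF g that] by simp
  have "(\<lambda>z. (\<integral>\<^sup>+u. g z u \<partial>MU) * indicator (space MZ - S) z) \<in> borel_measurable MZ"
    using g S by measurable
  then have "AE z in MZ. (\<integral>\<^sup>+u. g z u \<partial>MU) * indicator (space MZ - S) z = 0"
    using zero nn_integral_0_iff_AE by blast
  then have AE_AE: "AE z in MZ. AE u in MU. z \<in> S \<or> g z u = 0"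
    using AE_space
  proof eventually_elim
    case (elim z)
    show ?case
    proof (cases "z \<in> S")
      case False
      then have "(\<integral>\<^sup>+u. g z u \<partial>MU) = 0"
        using elim by simp
      then have "AE u in MU. g z u = 0"
        using nn_integral_0_iff_AE[OF g_z[OF elim(2)]] by simp
      then show ?thesis by (rule eventually_mono) simp
    qed simp
  qed
  have "{p \<in> space (MZ \<Otimes>\<^sub>M MU). fst p \<in> S \<or> g (fst p) (snd p) = 0} \<in> sets (MZ \<Otimes>\<^sub>M MU)"
    using g S by measurable
  then have "(AE z in MZ. AE u in MU. z \<in> S \<or> g z u = 0) \<longleftrightarrow>
      (AE u in MU. AE z in MZ. z \<in> S \<or> g z u = 0)"
    by (rule AE_commute)
  then show ?thesis
    using AE_AE by blast
qed

lemma AE_marginal_divide_eq_factor: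
  fixes b :: "'z \<Rightarrow> 'w \<Rightarrow> ennreal"
  assumes sZ: "sigma_finite_measure MZ" and sW: "sigma_finite_measure MW"
    and b: "(\<lambda>(z, w). b z w) \<in> borel_measurable (MZ \<Otimes>\<^sub>M MW)"
    and q: "q \<in> borel_measurable MZ" and c: "c \<in> borel_measurable MW"
    and factor: "AE z in MZ. AE w in MW. b z w = c w * q z"
    and pos: "0 < (\<integral>\<^sup>+z. q z \<partial>MZ)" and fin: "(\<integral>\<^sup>+z. q z \<partial>MZ) < \<infinity>"
  shows "AE w in MW. (\<integral>\<^sup>+z. b z w \<partial>MZ) / (\<integral>\<^sup>+z. q z \<partial>MZ) = c w"
proof -
  interpret pair_sigma_finite MZ MW using sZ sW by (simp add: pair_sigma_finite_def)
  have "{p \<in> space (MZ \<Otimes>\<^sub>M MW). b (fst p) (snd p) = c (snd p) * q (fst p)} \<in> sets (MZ \<Otimes>\<^sub>M MW)"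
    using b c q by measurable
  then have "(AE z in MZ. AE w in MW. b z w = c w * q z) \<longleftrightarrow>
      (AE w in MW. AE z in MZ. b z w = c w * q z)"
    by (rule AE_commute)
  with factor have "AE w in MW. AE z in MZ. b z w = c w * q z"
    by blast
  then show ?thesis
  proof eventually_elim
    case (elim w)
    have "(\<integral>\<^sup>+z. b z w \<partial>MZ) = c w * (\<integral>\<^sup>+z. q z \<partial>MZ)"
      using nn_integral_cong_AE[OF elim] nn_integral_cmult[OF q] by simp
    then show ?case
      using pos fin by (simp add: ennreal_mult_divide_eq)
  qed
qed

locale joint_density =
  fixes f :: "real \<Rightarrow> real \<Rightarrow> 'z \<Rightarrow> 'w \<Rightarrow> 'u \<Rightarrow> ennreal"
    and MZ :: "'z measure" and MW :: "'w measure" and MU :: "'u measure"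
  assumes sfZ: "sigma_finite_measure MZ"
    and sfW: "sigma_finite_measure MW"
    and sfU: "sigma_finite_measure MU"
    and f_meas: "(\<lambda>(y, d, z, w, u). f y d z w u)
                   \<in> borel_measurable (lborel \<Otimes>\<^sub>M (lborel \<Otimes>\<^sub>M (MZ \<Otimes>\<^sub>M (MW \<Otimes>\<^sub>M MU))))"
begin

lemma borel_measurable_f_comp:
  assumes "Y \<in> borel_measurable N" "D \<in> borel_measurable N" "Z \<in> measurable N MZ"
    "W \<in> measurable N MW" "U \<in> measurable N MU"
  shows "(\<lambda>x. f (Y x) (D x) (Z x) (W x) (U x)) \<in> borel_measurable N"
proof -
  have "(\<lambda>x. (Y x, D x, Z x, W x, U x))
      \<in> measurable N (lborel \<Otimes>\<^sub>M (lborel \<Otimes>\<^sub>M (MZ \<Otimes>\<^sub>M (MW \<Otimes>\<^sub>M MU))))"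
    using assms by (intro measurable_Pair) auto
  from measurable_compose[OF this f_meas] show ?thesis by simp
qed

lemma borel_measurable_dens_YDZU:
  assumes "z \<in> space MZ"
  shows "(\<lambda>(y, u). dens_YDZU f MW y d z u) \<in> borel_measurable (lborel \<Otimes>\<^sub>M MU)"
proof -
  have "(\<lambda>((y, u), w). f y d z w u) \<in> borel_measurable ((lborel \<Otimes>\<^sub>M MU) \<Otimes>\<^sub>M MW)"
    unfolding case_prod_beta by (rule borel_measurable_f_comp) (use assms in auto)
  from sigma_finite_measure.borel_measurable_nn_integral[OF sfW this]
  show ?thesis unfolding dens_YDZU_def by (simp add: case_prod_beta)
qed

lemma borel_measurable_dens_WDZU:
  assumes "z \<in> space MZ"
  shows "(\<lambda>(w, u). dens_WDZU f w d z u) \<in> borel_measurable (MW \<Otimes>\<^sub>M MU)"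
proof -
  have "(\<lambda>((w, u), y). f y d z w u) \<in> borel_measurable ((MW \<Otimes>\<^sub>M MU) \<Otimes>\<^sub>M lborel)"
    unfolding case_prod_beta by (rule borel_measurable_f_comp) (use assms in auto)
  from lborel.borel_measurable_nn_integral[OF this]
  show ?thesis unfolding dens_WDZU_def by (simp add: case_prod_beta)
qed

lemma borel_measurable_dens_WDZU_ZW:
  assumes "u \<in> space MU"
  shows "(\<lambda>(z, w). dens_WDZU f w d z u) \<in> borel_measurable (MZ \<Otimes>\<^sub>M MW)"
proof -
  have "(\<lambda>((z, w), y). f y d z w u) \<in> borel_measurable ((MZ \<Otimes>\<^sub>M MW) \<Otimes>\<^sub>M lborel)"
    unfolding case_prod_beta by (rule borel_measurable_f_comp) (use assms in auto)
  from lborel.borel_measurable_nn_integral[OF this]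
  show ?thesis unfolding dens_WDZU_def by (simp add: case_prod_beta)
qed

lemma borel_measurable_dens_DZU:
  "(\<lambda>(z, u). dens_DZU f MW d z u) \<in> borel_measurable (MZ \<Otimes>\<^sub>M MU)"
proof -
  have "(\<lambda>(((z, u), y), w). f y d z w u) \<in> borel_measurable (((MZ \<Otimes>\<^sub>M MU) \<Otimes>\<^sub>M lborel) \<Otimes>\<^sub>M MW)"
    unfolding case_prod_beta by (rule borel_measurable_f_comp) auto
  from sigma_finite_measure.borel_measurable_nn_integral[OF sfW this]
  have "(\<lambda>(p, y). (\<lambda>(z, u). dens_YDZU f MW y d z u) p)
      \<in> borel_measurable ((MZ \<Otimes>\<^sub>M MU) \<Otimes>\<^sub>M lborel)"
    unfolding dens_YDZU_def by (simp add: case_prod_beta)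
  from lborel.borel_measurable_nn_integral[OF this]
  show ?thesis unfolding dens_DZU_def by (simp add: case_prod_beta)
qed

lemma dens_DZU_eq_nn_integral_WDZU:
  assumes "z \<in> space MZ" "u \<in> space MU"
  shows "dens_DZU f MW d z u = (\<integral>\<^sup>+w. dens_WDZU f w d z u \<partial>MW)"
proof -
  interpret pair_sigma_finite lborel MW
    using sfW by (simp add: pair_sigma_finite_def lborel.sigma_finite_measure_axioms)
  have "(\<lambda>(y, w). f y d z w u) \<in> borel_measurable (lborel \<Otimes>\<^sub>M MW)"
    unfolding case_prod_beta by (rule borel_measurable_f_comp) (use assms in auto)
  from Fubini'[OF this] show ?thesis
    unfolding dens_DZU_def dens_YDZU_def dens_WDZU_def by simp
qed

lemma borel_measurable_cdens_W_DZU: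
  assumes "z \<in> space MZ" "u \<in> space MU"
  shows "(\<lambda>w. cdens_W_DZU f MW w d z u) \<in> borel_measurable MW"
proof -
  have "(\<lambda>w. dens_WDZU f w d z u) \<in> borel_measurable MW"
    using measurable_Pair1[OF borel_measurable_dens_WDZU[OF assms(1)] assms(2)] by simp
  then show ?thesis
    unfolding cdens_W_DZU_def by measurable
qed

lemma borel_measurable_cdens_W_DU:
  assumes "u \<in> space MU"
  shows "(\<lambda>w. cdens_W_DU f MZ MW w d u) \<in> borel_measurable MW"
proof -
  have "(\<lambda>(w, z). dens_WDZU f w d z u) \<in> borel_measurable (MW \<Otimes>\<^sub>M MZ)"
    using measurable_pair_swap[OF borel_measurable_dens_WDZU_ZW[OF assms]]
    by (simp add: case_prod_beta)
  from sigma_finite_measure.borel_measurable_nn_integral[OF sfZ this]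
  show ?thesis
    unfolding cdens_W_DU_def dens_WDU_def by measurable
qed

lemma nn_integral_cdens_W_DZU:
  assumes "z \<in> space MZ" "u \<in> space MU"
    and "0 < dens_DZU f MW d z u" "dens_DZU f MW d z u < \<infinity>"
  shows "(\<integral>\<^sup>+w. cdens_W_DZU f MW w d z u \<partial>MW) = 1"
proof -
  have "(\<lambda>w. dens_WDZU f w d z u) \<in> borel_measurable MW"
    using measurable_Pair1[OF borel_measurable_dens_WDZU[OF assms(1)] assms(2)] by simp
  then show ?thesis
    using assms unfolding cdens_W_DZU_def
    by (simp add: nn_integral_divide dens_DZU_eq_nn_integral_WDZU[symmetric] ennreal_divide_self)
qed

lemma dens_DU_pos_finite:
  assumes u: "u \<in> space MU" and z: "z \<in> space MZ"
    and pos: "0 < dens_DZU f MW d z u" and fin: "dens_DZU f MW d z u < \<infinity>"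
    and indepY: "Y_indep_Z_given_DU f MZ MW d z"
  shows "0 < dens_DU f MZ MW d u \<and> dens_DU f MZ MW d u < \<infinity>"
proof -
  have a_u: "(\<lambda>y. dens_YDZU f MW y d z u) \<in> borel_measurable lborel"
    using measurable_Pair1[OF borel_measurable_dens_YDZU[OF z] u] by simp
  then have "(\<lambda>y. cdens_Y_DZU f MW y d z u) \<in> borel_measurable lborel"
    unfolding cdens_Y_DZU_def by measurable
  moreover have "(\<integral>\<^sup>+y. cdens_Y_DZU f MW y d z u \<partial>lborel) = 1"
    using a_u pos fin
    by (simp add: cdens_Y_DZU_def nn_integral_divide dens_DZU_def[symmetric] ennreal_divide_self)
  moreover have "cdens_Y_DZU f MW y d z u = dens_YDU f MZ MW y d u / dens_DU f MZ MW d u" for y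
    using indepY pos unfolding Y_indep_Z_given_DU_def cdens_Y_DU_def by simp
  ultimately show ?thesis
    by (intro normalizer_pos_finite)
qed

lemma dens_WDZU_factorizes:
  assumes u: "u \<in> space MU" and Zeps: "Zeps \<in> sets MZ" and z: "z \<in> Zeps"
    and outside: "AE z' in MZ. z' \<in> Zeps \<or> dens_DZU f MW d z' u = 0"
    and pos: "0 < dens_DZU f MW d z u" and fin: "dens_DZU f MW d z u < \<infinity>"
    and indepW: "\<forall>z' \<in> Zeps. W_indep_DZ_given_U f MZ MW d z'"
  shows "AE z' in MZ. AE w in MW.
           dens_WDZU f w d z' u = cdens_W_DZU f MW w d z u * dens_DZU f MW d z' u"
proof -
  define c where "c w = cdens_W_DZU f MW w d z u" for w
  have z_space: "z \<in> space MZ"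
    using z Zeps sets.sets_into_space by blast
  have c_eq: "c w = dens_WDZU f w d z' u / dens_DZU f MW d z' u"
    if "z' \<in> Zeps" "0 < dens_DZU f MW d z' u" for z' w
    using indepW z that pos unfolding W_indep_DZ_given_U_def c_def cdens_W_DZU_def by auto
  have c_meas: "c \<in> borel_measurable MW"
    using borel_measurable_cdens_W_DZU[OF z_space u] by (simp add: c_def[abs_def])
  have c_prob: "(\<integral>\<^sup>+w. c w \<partial>MW) = 1"
    using nn_integral_cdens_W_DZU[OF z_space u pos fin] by (simp add: c_def)
  show ?thesis
    using outside AE_space
  proof eventually_elim
    case (elim z')
    show ?case
    proof (cases "dens_DZU f MW d z' u = 0")
      case True
      have "(\<lambda>w. dens_WDZU f w d z' u) \<in> borel_measurable MW"
        using measurable_Pair1[OF borel_measurable_dens_WDZU[OF elim(2)] u] by simp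
      moreover have "(\<integral>\<^sup>+w. dens_WDZU f w d z' u \<partial>MW) = 0"
        using True dens_DZU_eq_nn_integral_WDZU[OF elim(2) u] by simp
      ultimately have "AE w in MW. dens_WDZU f w d z' u = 0"
        by (simp add: nn_integral_0_iff_AE)
      then show ?thesis
        using True by (auto elim: eventually_mono)
    next
      case False
      then have z': "z' \<in> Zeps" "0 < dens_DZU f MW d z' u"
        using elim(1) by (auto simp: zero_less_iff_neq_zero)
      then have "dens_DZU f MW d z' u < \<infinity>"
        using normalizer_pos_finite[OF c_eq[OF z'] c_meas c_prob] by blast
      then have "c w * dens_DZU f MW d z' u = dens_WDZU f w d z' u" for w
        using z' by (simp add: c_eq ennreal_divide_times ennreal_divide_self less_top)
      then show ?thesis
        by (simp add: c_def)
    qed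
  qed
qed

lemma cdens_W_DU_AE_eq_cdens_W_DZU:
  assumes u: "u \<in> space MU" and Zeps: "Zeps \<in> sets MZ" and z: "z \<in> Zeps"
    and outside: "AE z' in MZ. z' \<in> Zeps \<or> dens_DZU f MW d z' u = 0"
    and pos: "0 < dens_DZU f MW d z u" and fin: "dens_DZU f MW d z u < \<infinity>"
    and indepY: "Y_indep_Z_given_DU f MZ MW d z"
    and indepW: "\<forall>z' \<in> Zeps. W_indep_DZ_given_U f MZ MW d z'"
  shows "AE w in MW. cdens_W_DU f MZ MW w d u = cdens_W_DZU f MW w d z u"
proof -
  have z_space: "z \<in> space MZ"
    using z Zeps sets.sets_into_space by blast
  have "(\<lambda>z'. dens_DZU f MW d z' u) \<in> borel_measurable MZ"
    using measurable_Pair1[OF borel_measurable_dens_DZU u] by simp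
  from AE_marginal_divide_eq_factor[OF sfZ sfW borel_measurable_dens_WDZU_ZW[OF u] this
      borel_measurable_cdens_W_DZU[OF z_space u]
      dens_WDZU_factorizes[OF u Zeps z outside pos fin indepW]]
  show ?thesis
    using dens_DU_pos_finite[OF u z_space pos fin indepY]
    by (simp add: cdens_W_DU_def dens_WDU_def dens_DU_def)
qed

lemma cond_mean_Y_DZU_eq_cint_W_DZU:
  assumes u: "u \<in> space MU" and Zeps: "Zeps \<in> sets MZ" and z: "z \<in> Zeps"
    and outside: "AE z' in MZ. z' \<in> Zeps \<or> dens_DZU f MW d z' u = 0"
    and pos: "0 < dens_DZU f MW d z u" and fin: "dens_DZU f MW d z u < \<infinity>"
    and indepY: "Y_indep_Z_given_DU f MZ MW d z"
    and indepW: "\<forall>z' \<in> Zeps. W_indep_DZ_given_U f MZ MW d z'"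
    and h: "h \<in> borel_measurable MW"
    and bridge: "0 < dens_DU f MZ MW d u \<longrightarrow> condE_Y_DU f MZ MW d u = cint_W_DU h f MZ MW d u"
  shows "(\<integral>y. y * enn2real (cdens_Y_DZU f MW y d z u) \<partial>lborel)
       = (\<integral>w. h w * enn2real (cdens_W_DZU f MW w d z u) \<partial>MW)"
proof -
  have z_space: "z \<in> space MZ"
    using z Zeps sets.sets_into_space by blast
  have "(\<integral>y. y * enn2real (cdens_Y_DZU f MW y d z u) \<partial>lborel) = condE_Y_DU f MZ MW d u"
    using indepY pos unfolding Y_indep_Z_given_DU_def condE_Y_DU_def by simp
  also have "\<dots> = cint_W_DU h f MZ MW d u"
    using bridge dens_DU_pos_finite[OF u z_space pos fin indepY] by blast
  also have "\<dots> = (\<integral>w. h w * enn2real (cdens_W_DZU f MW w d z u) \<partial>MW)"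
    unfolding cint_W_DU_def
  proof (rule integral_cong_AE)
    show "AE w in MW. h w * enn2real (cdens_W_DU f MZ MW w d u)
                    = h w * enn2real (cdens_W_DZU f MW w d z u)"
      using cdens_W_DU_AE_eq_cdens_W_DZU[OF u Zeps z outside pos fin indepY indepW]
      by eventually_elim simp
    show "(\<lambda>w. h w * enn2real (cdens_W_DU f MZ MW w d u)) \<in> borel_measurable MW"
      using h borel_measurable_cdens_W_DU[OF u] by measurable
    show "(\<lambda>w. h w * enn2real (cdens_W_DZU f MW w d z u)) \<in> borel_measurable MW"
      using h borel_measurable_cdens_W_DZU[OF z_space u] by measurable
  qed
  finally show ?thesis .
qed

lemma nn_integral_dens_WDZ:
  assumes "z \<in> space MZ"
  shows "(\<integral>\<^sup>+w. dens_WDZ f MU w d z \<partial>MW) = dens_DZ f MW MU d z"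
proof -
  interpret pair_sigma_finite MW MU
    using sfW sfU by (simp add: pair_sigma_finite_def)
  show ?thesis
    using Fubini'[OF borel_measurable_dens_WDZU[OF assms]]
    by (simp add: dens_WDZ_def dens_DZ_def dens_DZU_eq_nn_integral_WDZU[OF assms] cong: nn_integral_cong)
qed

lemma AE_integral_YDZU_eq_integral_WDZU:
  assumes Zeps: "Zeps \<in> sets MZ" and z: "z \<in> Zeps"
    and outside: "AE u in MU. AE z' in MZ. z' \<in> Zeps \<or> dens_DZU f MW d z' u = 0"
    and indepY: "Y_indep_Z_given_DU f MZ MW d z"
    and indepW: "\<forall>z' \<in> Zeps. W_indep_DZ_given_U f MZ MW d z'"
    and h: "h \<in> borel_measurable MW"
    and bridge: "AE u in MU. 0 < dens_DU f MZ MW d u \<longrightarrow>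
                   condE_Y_DU f MZ MW d u = cint_W_DU h f MZ MW d u"
  shows "AE u in MU. 0 < dens_DZU f MW d z u \<and> dens_DZU f MW d z u < \<infinity> \<longrightarrow>
           (\<integral>y. y * enn2real (dens_YDZU f MW y d z u) \<partial>lborel)
           = (\<integral>w. h w * enn2real (dens_WDZU f w d z u) \<partial>MW)"
  using outside bridge AE_space
proof eventually_elim
  case (elim u)
  show ?case
  proof
    assume q: "0 < dens_DZU f MW d z u \<and> dens_DZU f MW d z u < \<infinity>"
    then have "enn2real (dens_DZU f MW d z u) \<noteq> 0"
      by (auto simp: enn2real_eq_0_iff)
    with cond_mean_Y_DZU_eq_cint_W_DZU[OF elim(3) Zeps z elim(1) _ _ indepY indepW h elim(2)] q
    show "(\<integral>y. y * enn2real (dens_YDZU f MW y d z u) \<partial>lborel)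
        = (\<integral>w. h w * enn2real (dens_WDZU f w d z u) \<partial>MW)"
      by (simp add: cdens_Y_DZU_def cdens_W_DZU_def integral_mult_enn2real_divide)
  qed
qed

lemma condE_Y_DZ_eq_cint_W_DZ:
  assumes Zeps: "Zeps \<in> sets MZ" and z: "z \<in> Zeps"
    and outside: "AE u in MU. AE z' in MZ. z' \<in> Zeps \<or> dens_DZU f MW d z' u = 0"
    and indepY: "Y_indep_Z_given_DU f MZ MW d z"
    and indepW: "\<forall>z' \<in> Zeps. W_indep_DZ_given_U f MZ MW d z'"
    and h: "h \<in> borel_measurable MW" and h_bound: "\<And>w. \<bar>h w\<bar> \<le> C"
    and bridge: "AE u in MU. 0 < dens_DU f MZ MW d u \<longrightarrow>
                   condE_Y_DU f MZ MW d u = cint_W_DU h f MZ MW d u"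
    and Y_int: "integrable lborel (\<lambda>y. y * enn2real (cdens_Y_DZ f MW MU y d z))"
  shows "condE_Y_DZ f MW MU d z = cint_W_DZ h f MW MU d z"
proof -
  have z_space: "z \<in> space MZ"
    using z Zeps sets.sets_into_space by blast
  define p where "p = enn2real (dens_DZ f MW MU d z)"
  have LHS: "condE_Y_DZ f MW MU d z = (\<integral>y. y * enn2real (dens_YDZ f MW MU y d z) \<partial>lborel) / p"
    by (simp add: condE_Y_DZ_def cdens_Y_DZ_def integral_mult_enn2real_divide p_def)
  have RHS: "cint_W_DZ h f MW MU d z = (\<integral>w. h w * enn2real (dens_WDZ f MU w d z) \<partial>MW) / p"
    by (simp add: cint_W_DZ_def cdens_W_DZ_def integral_mult_enn2real_divide p_def)
  show ?thesis
  proof (cases "p = 0")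
    case False
    then have DZ_fin: "dens_DZ f MW MU d z < \<infinity>"
      unfolding p_def infinity_ennreal_def using enn2real_top less_top by metis
    have "(\<integral>y. y * enn2real (dens_YDZ f MW MU y d z) \<partial>lborel)
        = (\<integral>w. h w * enn2real (dens_WDZ f MU w d z) \<partial>MW)"
      unfolding dens_YDZ_def dens_WDZ_def
    proof (rule integral_mixture_eq[OF lborel.sigma_finite_measure_axioms sfW sfU
          borel_measurable_dens_YDZU[OF z_space] borel_measurable_dens_WDZU[OF z_space] _ h
          _ _ _ _ _ AE_integral_YDZU_eq_integral_WDZU[OF Zeps z outside indepY indepW h bridge]])
      show "integrable lborel (\<lambda>y. y * enn2real (\<integral>\<^sup>+u. dens_YDZU f MW y d z u \<partial>MU))"
        using integrable_mult_right[OF Y_int, of p] False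
        by (simp add: cdens_Y_DZ_def integral_mult_enn2real_divide enn2real_divide p_def dens_YDZ_def)
      show "integrable MW (\<lambda>w. h w * enn2real (\<integral>\<^sup>+u. dens_WDZU f w d z u \<partial>MU))"
        using borel_measurable_dens_WDZU[OF z_space] DZ_fin nn_integral_dens_WDZ[OF z_space]
        by (intro integrable_bounded_mult_enn2real[OF h h_bound])
           (auto simp: dens_WDZ_def sigma_finite_measure.borel_measurable_nn_integral[OF sfU])
      show "(\<integral>\<^sup>+u. dens_DZU f MW d z u \<partial>MU) < \<infinity>"
        using DZ_fin by (simp add: dens_DZ_def)
    qed (simp_all add: dens_DZU_def[symmetric] dens_DZU_eq_nn_integral_WDZU[OF z_space])
    then show ?thesis
      using LHS RHS by simp
  qed (simp add: LHS RHS)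
qed

end

lemma borel_measurable_h0:
  assumes "(\<lambda>(t, w). hp t w) \<in> borel_measurable (borel \<Otimes>\<^sub>M M)"
    and "(\<lambda>(t, w). hm t w) \<in> borel_measurable (borel \<Otimes>\<^sub>M M)"
  shows "h0 hp hm t \<in> borel_measurable M"
  using measurable_Pair2[OF assms(1), of t] measurable_Pair2[OF assms(2), of t]
  by (simp add: h0_def[abs_def])

lemma h0_Dplus: "d \<in> Dplus dstar eps \<Longrightarrow> h0 hp hm (d - dstar) = hp (d - dstar)"
  by (simp add: Dplus_def h0_def[abs_def])

lemma h0_Dminus: "d \<in> Dminus dstar eps \<Longrightarrow> h0 hp hm (d - dstar) = hm (d - dstar)"
  by (simp add: Dminus_def h0_def[abs_def])

lemma bounded_h0:
  assumes "\<exists>B. \<forall>t w. \<bar>hp t w\<bar> \<le> B" and "\<exists>B. \<forall>t w. \<bar>hm t w\<bar> \<le> B"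
  shows "\<exists>B. \<forall>t w. \<bar>h0 hp hm t w\<bar> \<le> B"
proof -
  obtain Bp Bm where "\<forall>t w. \<bar>hp t w\<bar> \<le> Bp" "\<forall>t w. \<bar>hm t w\<bar> \<le> Bm"
    using assms by blast
  then have "\<forall>t w. \<bar>h0 hp hm t w\<bar> \<le> max Bp Bm"
    by (auto simp: h0_def le_max_iff_disj)
  then show ?thesis ..
qed

theorem lemma3:
  fixes f :: "real \<Rightarrow> real \<Rightarrow> 'z \<Rightarrow> 'w \<Rightarrow> 'u \<Rightarrow> ennreal"
    and MZ :: "'z measure" and MW :: "'w measure" and MU :: "'u measure"
    and dstar eps :: real and Zeps :: "'z set"
    and hp hm :: "real \<Rightarrow> 'w \<Rightarrow> real"
  assumes sfZ: "sigma_finite_measure MZ"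
    and sfW: "sigma_finite_measure MW"
    and sfU: "sigma_finite_measure MU"
    and f_meas: "(\<lambda>(y, d, z, w, u). f y d z w u)
                   \<in> borel_measurable (lborel \<Otimes>\<^sub>M (lborel \<Otimes>\<^sub>M (MZ \<Otimes>\<^sub>M (MW \<Otimes>\<^sub>M MU))))"
    and f_prob: "(\<integral>\<^sup>+ x. (\<lambda>(y, d, z, w, u). f y d z w u) x
                   \<partial>(lborel \<Otimes>\<^sub>M (lborel \<Otimes>\<^sub>M (MZ \<Otimes>\<^sub>M (MW \<Otimes>\<^sub>M MU))))) = 1"
    and eps_pos: "eps > 0"
    and Zeps_sets: "Zeps \<in> sets MZ"
    and Zeps_full: "\<forall>d \<in> Dwin dstar eps.
                      (\<integral>\<^sup>+ z. dens_DZ f MW MU d z * indicator (space MZ - Zeps) z \<partial>MZ) = 0"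
    and indepY: "\<forall>d \<in> Dwin dstar eps. \<forall>z \<in> Zeps. Y_indep_Z_given_DU f MZ MW d z"
    and indepW: "\<forall>d \<in> Dwin dstar eps. \<forall>z \<in> Zeps. W_indep_DZ_given_U f MZ MW d z"
    and hp_meas: "(\<lambda>(t, w). hp t w) \<in> borel_measurable (borel \<Otimes>\<^sub>M MW)"
    and hm_meas: "(\<lambda>(t, w). hm t w) \<in> borel_measurable (borel \<Otimes>\<^sub>M MW)"
    and hp_bdd: "\<exists>B. \<forall>t w. \<bar>hp t w\<bar> \<le> B"
    and hm_bdd: "\<exists>B. \<forall>t w. \<bar>hm t w\<bar> \<le> B"
    and bridge_p: "\<forall>d \<in> Dplus dstar eps. AE u in MU. 0 < dens_DU f MZ MW d u \<longrightarrow>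
                     condE_Y_DU f MZ MW d u = cint_W_DU (hp (d - dstar)) f MZ MW d u"
    and bridge_m: "\<forall>d \<in> Dminus dstar eps. AE u in MU. 0 < dens_DU f MZ MW d u \<longrightarrow>
                     condE_Y_DU f MZ MW d u = cint_W_DU (hm (d - dstar)) f MZ MW d u"
    and Y_integrable: "\<forall>d \<in> Dwin dstar eps. \<forall>z \<in> Zeps.
                     integrable lborel (\<lambda>y. y * enn2real (cdens_Y_DZ f MW MU y d z))"
  shows "\<forall>d \<in> Dwin dstar eps. \<forall>z \<in> Zeps.
           condE_Y_DZ f MW MU d z = cint_W_DZ (h0 hp hm (d - dstar)) f MW MU d z"
proof (intro ballI)
  fix d z
  assume d: "d \<in> Dwin dstar eps" and z: "z \<in> Zeps"
  interpret joint_density f MZ MW MU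
    using sfZ sfW sfU f_meas by (rule joint_density.intro)
  obtain C where C: "\<forall>t w. \<bar>h0 hp hm t w\<bar> \<le> C"
    using bounded_h0[OF hp_bdd hm_bdd] by blast
  have bridge: "AE u in MU. 0 < dens_DU f MZ MW d u \<longrightarrow>
      condE_Y_DU f MZ MW d u = cint_W_DU (h0 hp hm (d - dstar)) f MZ MW d u"
    using d bridge_p bridge_m by (auto simp: Dwin_def h0_Dplus h0_Dminus)
  have outside: "AE u in MU. AE z' in MZ. z' \<in> Zeps \<or> dens_DZU f MW d z' u = 0"
    using Zeps_full d unfolding dens_DZ_def
    by (intro AE_AE_eq_0_outside[OF sfZ sfU borel_measurable_dens_DZU Zeps_sets]) blast
  show "condE_Y_DZ f MW MU d z = cint_W_DZ (h0 hp hm (d - dstar)) f MW MU d z"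
    using indepY indepW Y_integrable d z C
    by (intro condE_Y_DZ_eq_cint_W_DZ[OF Zeps_sets z outside _ _
          borel_measurable_h0[OF hp_meas hm_meas] _ bridge]) auto
qed

end
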